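(* Let $n\ge 1$, let $S=\{s_1,\dots,s_{n-1}\}$ with $s_i=(i,i+1)$ be the simple reflections of $S_n$, let $I_n=\{\pi\in S_n : \pi^2=\mathrm{id}\}$, and let $V_n$ be the $\mathbb{Q}$-vector space with basis $\{C_w : w\in I_n\}$. Define $\rho:S\to GL(V_n)$ by $\rho(s)C_w=\mathrm{sign}(s;w)\,C_{sws}$ for $s\in S$, $w\in I_n$, where $\mathrm{sign}(s;w)=-1$ if $sws=w$ and $s\in\mathrm{Des}(w)$, and $\mathrm{sign}(s;w)=1$ otherwise. Then $\rho$ extends (uniquely) to a group homomorphism $S_n\to GL(V_n)$, i.e. it determines a representation of $S_n$.
   Context: $\ell(\pi)$ is the Coxeter length of $\pi\in S_n$ with respect to $S$ (the number of inversions), and the descent set is $\mathrm{Des}(\pi)=\{s\in S:\ell(\pi s)<\ell(\pi)\}$; equivalently $s_i\in\mathrm{Des}(\pi)$ iff $\pi(i)>\pi(i+1)$. *)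

theory Defs
  imports Complex_Main "HOL-Algebra.Sym_Groups"
begin

text \<open>Permutations of {1..n} as in HOL-Algebra's sym_group. The simple reflection
  s_i is the transposition (i, i+1), 1 \<le> i \<le> n-1.\<close>

definition simple_refl :: "nat \<Rightarrow> (nat \<Rightarrow> nat)" where
  "simple_refl i = Transposition.transpose i (Suc i)"

definition coxeter_length :: "nat \<Rightarrow> (nat \<Rightarrow> nat) \<Rightarrow> nat" where
  "coxeter_length n p = card {(i, j). 1 \<le> i \<and> i < j \<and> j \<le> n \<and> p i > p j}"

definition is_descent :: "nat \<Rightarrow> nat \<Rightarrow> (nat \<Rightarrow> nat) \<Rightarrow> bool" where
  "is_descent n i p \<longleftrightarrow> coxeter_length n (p \<circ> simple_refl i) < coxeter_length n p"

definition involutions :: "nat \<Rightarrow> (nat \<Rightarrow> nat) set" where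
  "involutions n = {w. w permutes {1..n} \<and> w \<circ> w = id}"

text \<open>V_n: the Q-vector space with basis {C_w : w \<in> I_n}, represented by coefficient
  functions supported on I_n.\<close>
definition Vn :: "nat \<Rightarrow> ((nat \<Rightarrow> nat) \<Rightarrow> rat) set" where
  "Vn n = {f. \<forall>w. w \<notin> involutions n \<longrightarrow> f w = 0}"

definition sign_sw :: "nat \<Rightarrow> nat \<Rightarrow> (nat \<Rightarrow> nat) \<Rightarrow> rat" where
  "sign_sw n i w =
     (if simple_refl i \<circ> w \<circ> simple_refl i = w \<and> is_descent n i w then -1 else 1)"

text \<open>rho(s_i) C_w = sign(s_i;w) C_{s_i w s_i}, extended linearly: the coefficient of
  C_u in rho(s_i) f is sign(s_i; s_i u s_i) * f(s_i u s_i).\<close>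
definition rho :: "nat \<Rightarrow> nat \<Rightarrow> ((nat \<Rightarrow> nat) \<Rightarrow> rat) \<Rightarrow> ((nat \<Rightarrow> nat) \<Rightarrow> rat)" where
  "rho n i f = (\<lambda>u. if u \<in> involutions n then
      (let w = simple_refl i \<circ> u \<circ> simple_refl i in sign_sw n i w * f w) else 0)"

definition linear_on_Vn :: "nat \<Rightarrow> (((nat \<Rightarrow> nat) \<Rightarrow> rat) \<Rightarrow> ((nat \<Rightarrow> nat) \<Rightarrow> rat)) \<Rightarrow> bool" where
  "linear_on_Vn n A \<longleftrightarrow> (\<forall>f\<in>Vn n. \<forall>g\<in>Vn n. \<forall>a b :: rat.
      A (\<lambda>w. a * f w + b * g w) = (\<lambda>w. a * A f w + b * A g w))"

definition GLV :: "nat \<Rightarrow> (((nat \<Rightarrow> nat) \<Rightarrow> rat) \<Rightarrow> ((nat \<Rightarrow> nat) \<Rightarrow> rat)) monoid" where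
  "GLV n = \<lparr> carrier = {A. A \<in> extensional (Vn n) \<and> bij_betw A (Vn n) (Vn n) \<and> linear_on_Vn n A},
             mult = (\<lambda>A B. restrict (A \<circ> B) (Vn n)),
             one = restrict id (Vn n) \<rparr>"

end

theory Submission
  imports Defs
begin

text \<open>The extension is written down explicitly. For a permutation \<open>p\<close> and an involution \<open>w\<close> let
  \<open>\<epsilon>(p; w)\<close> be \<open>(-1)\<close> to the number of 2-cycles \<open>(a, b)\<close>, \<open>a < b\<close>, of \<open>w\<close> with \<open>p a > p b\<close>, and set
  \<open>p C\<^sub>w = \<epsilon>(p; w) C\<^bsub>p w p\<inverse>\<^esub>\<close>. Reindexing the 2-cycles of \<open>q w q\<inverse>\<close> by those of \<open>w\<close> gives the
  cocycle identity \<open>\<epsilon>(p q; w) = \<epsilon>(p; q w q\<inverse>) \<epsilon>(q; w)\<close>, so this is a representation. For \<open>p = s\<^sub>i\<close>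
  the sign is \<open>-1\<close> iff \<open>(i, i+1)\<close> is a 2-cycle of \<open>w\<close>, which for an involution happens iff
  \<open>s\<^sub>i w s\<^sub>i = w\<close> and \<open>s\<^sub>i\<close> is a descent of \<open>w\<close>; so the representation extends \<open>\<rho>\<close>. Uniqueness holds
  because the simple reflections generate \<open>S\<^sub>n\<close>: every transposition is a conjugate of a simple
  reflection by simple reflections.\<close>

lemma simple_refl_apply:
  "simple_refl i x = (if x = i then Suc i else if x = Suc i then i else x)"
  by (simp add: simple_refl_def Transposition.transpose_def)

lemma simple_refl_simple_refl [simp]: "simple_refl i (simple_refl i x) = x"
  by (simp add: simple_refl_apply)

lemma simple_refl_at [simp]: "simple_refl i i = Suc i" "simple_refl i (Suc i) = i"
  by (simp_all add: simple_refl_apply)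

lemma simple_refl_other: "x \<noteq> i \<Longrightarrow> x \<noteq> Suc i \<Longrightarrow> simple_refl i x = x"
  by (simp add: simple_refl_apply)

lemma simple_refl_less_self_iff: "simple_refl i x < x \<longleftrightarrow> x = Suc i"
  by (simp add: simple_refl_apply)

lemma inv_simple_refl [simp]: "inv' (simple_refl i) = simple_refl i"
  by (simp add: simple_refl_def)

lemma simple_refl_less:
  "a < b \<Longrightarrow> (a, b) \<noteq> (i, Suc i) \<Longrightarrow> simple_refl i a < simple_refl i b"
  by (auto simp: simple_refl_apply)

lemma simple_refl_permutes: "1 \<le> i \<Longrightarrow> i < n \<Longrightarrow> simple_refl i permutes {1..n}"
  unfolding simple_refl_def by (rule permutes_swap_id) auto

definition inversions :: "nat \<Rightarrow> (nat \<Rightarrow> nat) \<Rightarrow> (nat \<times> nat) set" where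
  "inversions n p = {(i, j). 1 \<le> i \<and> i < j \<and> j \<le> n \<and> p i > p j}"

lemma coxeter_length_eq_card_inversions: "coxeter_length n p = card (inversions n p)"
  by (simp add: coxeter_length_def inversions_def)

lemma finite_inversions: "finite (inversions n p)"
  by (rule finite_subset[of _ "{1..n} \<times> {1..n}"]) (auto simp: inversions_def)

lemma inversions_comp_simple_refl:
  assumes "1 \<le> i" "i < n"
  shows "inversions n (p \<circ> simple_refl i) - {(i, Suc i)} =
           map_prod (simple_refl i) (simple_refl i) ` (inversions n p - {(i, Suc i)})"
proof -
  let ?s = "simple_refl i" and ?e = "(i, Suc i)"
  define f where "f = map_prod ?s ?s"
  have involutive: "f (f x) = x" for x by (cases x) (simp add: f_def)
  have image: "x \<in> f ` A \<longleftrightarrow> f x \<in> A" for x A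
    by (metis involutive image_eqI imageE)
  have range: "1 \<le> ?s x \<and> ?s x \<le> n \<longleftrightarrow> 1 \<le> x \<and> x \<le> n" for x
    using assms by (auto simp: simple_refl_apply)
  have order: "a < b \<and> (a, b) \<noteq> ?e \<longleftrightarrow> ?s a < ?s b \<and> (?s a, ?s b) \<noteq> ?e" for a b
    using simple_refl_less[of a b i] simple_refl_less[of "?s a" "?s b" i]
    by (metis Pair_inject less_not_sym simple_refl_at simple_refl_simple_refl)
  have pointwise: "(a, b) \<in> inversions n (p \<circ> ?s) - {?e} \<longleftrightarrow> f (a, b) \<in> inversions n p - {?e}"
    for a b
    using range[of a] range[of b] order[of a b] by (auto simp: inversions_def f_def)
  have "inversions n (p \<circ> ?s) - {?e} = f ` (inversions n p - {?e})"
  proof (rule Set.set_eqI)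
    fix x :: "nat \<times> nat"
    show "x \<in> inversions n (p \<circ> ?s) - {?e} \<longleftrightarrow> x \<in> f ` (inversions n p - {?e})"
      using image[of x] pointwise[of "fst x" "snd x"] by simp
  qed
  then show ?thesis by (simp add: f_def)
qed

lemma card_inversions_comp_simple_refl:
  assumes "1 \<le> i" "i < n"
  shows "card (inversions n (p \<circ> simple_refl i) - {(i, Suc i)}) = card (inversions n p - {(i, Suc i)})"
proof -
  have "inj (map_prod (simple_refl i) (simple_refl i))"
    by (rule injI) (metis map_prod_simp prod.collapse simple_refl_simple_refl)
  then show ?thesis
    by (simp add: inversions_comp_simple_refl[OF assms] card_image inj_on_subset)
qed

lemma is_descent_iff:
  assumes "1 \<le> i" "i < n" "inj p"
  shows "is_descent n i p \<longleftrightarrow> p (Suc i) < p i"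
proof -
  let ?e = "(i, Suc i)"
  have same: "card (inversions n (p \<circ> simple_refl i) - {?e}) = card (inversions n p - {?e})"
    by (rule card_inversions_comp_simple_refl[OF assms(1,2)])
  have "p i \<noteq> p (Suc i)" using assms(3) by (auto dest: injD)
  then consider "p (Suc i) < p i" | "p i < p (Suc i)" by linarith
  then show ?thesis
  proof cases
    case 1
    then have "?e \<in> inversions n p" "?e \<notin> inversions n (p \<circ> simple_refl i)"
      using assms by (auto simp: inversions_def simple_refl_apply)
    then have "card (inversions n (p \<circ> simple_refl i)) < card (inversions n p)"
      using same finite_inversions card_Diff1_less[of "inversions n p" ?e] by simp
    then show ?thesis using 1 by (simp add: is_descent_def coxeter_length_eq_card_inversions)
  next
    case 2
    then have "?e \<notin> inversions n p" "?e \<in> inversions n (p \<circ> simple_refl i)"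
      using assms by (auto simp: inversions_def simple_refl_apply)
    then have "card (inversions n (p \<circ> simple_refl i)) > card (inversions n p)"
      using same finite_inversions card_Diff1_less[of "inversions n (p \<circ> simple_refl i)" ?e] by simp
    then show ?thesis using 2 by (simp add: is_descent_def coxeter_length_eq_card_inversions)
  qed
qed

lemma involutions_apply: "w \<in> involutions n \<Longrightarrow> w (w x) = x"
  by (auto simp: involutions_def fun_eq_iff dest: fun_cong[of _ _ x])

lemma involutions_permutes: "w \<in> involutions n \<Longrightarrow> w permutes {1..n}"
  by (simp add: involutions_def)

lemma conj_in_involutions:
  assumes p: "p permutes {1..n}" and u: "u \<in> involutions n"
  shows "inv' p \<circ> u \<circ> p \<in> involutions n"
proof -
  have "(inv' p \<circ> u \<circ> p) \<circ> (inv' p \<circ> u \<circ> p) = inv' p \<circ> u \<circ> (p \<circ> inv' p) \<circ> u \<circ> p"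
    by (simp add: comp_assoc)
  also have "\<dots> = inv' p \<circ> (u \<circ> u) \<circ> p"
    by (simp add: permutes_inv_o[OF p] comp_assoc)
  also have "\<dots> = id"
    using p u by (simp add: involutions_def permutes_inv_o)
  moreover have "inv' p \<circ> u \<circ> p permutes {1..n}"
    using p u by (intro permutes_compose permutes_inv) (auto simp: involutions_def)
  ultimately show ?thesis by (simp add: involutions_def)
qed

lemma sign_sw_eq:
  assumes w: "w \<in> involutions n" and i: "1 \<le> i" "i < n"
  shows "sign_sw n i w = (if w i = Suc i then -1 else 1)"
proof -
  let ?s = "simple_refl i"
  have ww: "w (w x) = x" for x using w by (rule involutions_apply)
  have "is_descent n i w \<longleftrightarrow> w (Suc i) < w i"
    using i permutes_inj[OF involutions_permutes[OF w]] by (rule is_descent_iff)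
  moreover have "?s \<circ> w \<circ> ?s = w \<and> w (Suc i) < w i \<longleftrightarrow> w i = Suc i"
  proof
    assume "?s \<circ> w \<circ> ?s = w \<and> w (Suc i) < w i"
    then have conj: "?s \<circ> w \<circ> ?s = w" and descent: "w (Suc i) < w i" by auto
    have "?s (w i) = w (Suc i)" using fun_cong[OF conj, of "Suc i"] by simp
    with descent have "?s (w i) < w i" by simp
    then show "w i = Suc i" by (simp add: simple_refl_less_self_iff)
  next
    assume a: "w i = Suc i"
    then have b: "w (Suc i) = i" using ww[of i] by simp
    have "?s (w (?s x)) = w x" for x
    proof -
      consider "x = i" | "x = Suc i" | "x \<noteq> i" "x \<noteq> Suc i" by blast
      then show ?thesis
      proof cases
        case 3
        then have "w x \<noteq> i" "w x \<noteq> Suc i" using ww[of x] a b by auto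
        then show ?thesis using 3 by (simp add: simple_refl_other)
      qed (simp_all add: a b)
    qed
    then show "?s \<circ> w \<circ> ?s = w \<and> w (Suc i) < w i" using a b by (simp add: fun_eq_iff)
  qed
  ultimately show ?thesis by (simp add: sign_sw_def)
qed

lemma involution_reorient_bij:
  fixes w :: "'a::linorder \<Rightarrow> 'a" and q :: "'a \<Rightarrow> 'b::linorder"
  assumes closed: "\<And>i. i \<in> S \<Longrightarrow> w i \<in> S" and ww: "\<And>i. w (w i) = i" and q: "inj_on q S"
  shows "bij_betw (\<lambda>i. if q i < q (w i) then i else w i) {i \<in> S. i < w i} {i \<in> S. q i < q (w i)}"
proof (rule bij_betw_byWitness[where f' = "\<lambda>j. if j < w j then j else w j"])
  show "(\<lambda>i. if q i < q (w i) then i else w i) ` {i \<in> S. i < w i} \<subseteq> {i \<in> S. q i < q (w i)}"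
  proof (rule image_subsetI)
    fix i assume "i \<in> {i \<in> S. i < w i}"
    then have i: "i \<in> S" "i \<noteq> w i" by auto
    then have "q i \<noteq> q (w i)" using closed inj_onD[OF q] by metis
    then show "(if q i < q (w i) then i else w i) \<in> {i \<in> S. q i < q (w i)}"
      using i closed[of i] ww[of i] by (auto simp: not_less_iff_gr_or_eq)
  qed
  show "(\<lambda>j. if j < w j then j else w j) ` {i \<in> S. q i < q (w i)} \<subseteq> {i \<in> S. i < w i}"
  proof (rule image_subsetI)
    fix j assume "j \<in> {i \<in> S. q i < q (w i)}"
    then have j: "j \<in> S" "q j < q (w j)" by auto
    then have "j \<noteq> w j" by auto
    then show "(if j < w j then j else w j) \<in> {i \<in> S. i < w i}"
      using j closed[of j] ww[of j] by (auto simp: not_less_iff_gr_or_eq)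
  qed
qed (use ww in auto)

definition order_sign :: "nat \<Rightarrow> nat \<Rightarrow> rat" where
  "order_sign x y = (if x < y then 1 else -1)"

text \<open>\<open>arc_sign n p w\<close> is \<open>\<epsilon>(p; w)\<close>, with the 2-cycles of \<open>w\<close> indexed by their smaller entry.\<close>

definition arcs :: "nat \<Rightarrow> (nat \<Rightarrow> nat) \<Rightarrow> nat set" where
  "arcs n w = {i \<in> {1..n}. i < w i}"

definition arc_sign :: "nat \<Rightarrow> (nat \<Rightarrow> nat) \<Rightarrow> (nat \<Rightarrow> nat) \<Rightarrow> rat" where
  "arc_sign n p w = (\<Prod>i \<in> arcs n w. order_sign (p i) (p (w i)))"

lemma arc_sign_id: "arc_sign n id w = 1"
  by (simp add: arc_sign_def arcs_def order_sign_def)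

lemma arc_sign_square: "arc_sign n p w * arc_sign n p w = 1"
  unfolding arc_sign_def prod.distrib[symmetric] by (rule prod.neutral) (simp add: order_sign_def)

lemma finite_arcs: "finite (arcs n w)"
  by (simp add: arcs_def)

lemma arc_sign_simple_refl:
  assumes w: "w \<in> involutions n" and i: "1 \<le> i" "i < n"
  shows "arc_sign n (simple_refl i) w = (if w i = Suc i then -1 else 1)"
proof -
  let ?s = "simple_refl i" and ?h = "\<lambda>j. order_sign (simple_refl i j) (simple_refl i (w j))"
  have other: "?h j = 1" if "j \<in> arcs n w" "\<not> (j = i \<and> w j = Suc i)" for j
    using simple_refl_less[of j "w j" i] that by (auto simp: arcs_def order_sign_def)
  show ?thesis
  proof (cases "w i = Suc i")
    case True
    then have "i \<in> arcs n w" using i by (simp add: arcs_def)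
    then have "arc_sign n ?s w = ?h i * (\<Prod>j \<in> arcs n w - {i}. ?h j)"
      unfolding arc_sign_def by (rule prod.remove[OF finite_arcs])
    also have "(\<Prod>j \<in> arcs n w - {i}. ?h j) = 1"
      by (rule prod.neutral) (use other in auto)
    finally show ?thesis using True by (simp add: order_sign_def)
  next
    case False
    then show ?thesis
      unfolding arc_sign_def by (simp add: prod.neutral other)
  qed
qed

text \<open>The 2-cycles of \<open>q w q\<inverse>\<close> are the images under \<open>q\<close> of those of \<open>w\<close>, here indexed by their
  preimage in \<open>w\<close> whose \<open>q\<close>-image is the smaller entry.\<close>

lemma arc_sign_conj:
  assumes q: "q permutes {1..n}"
  shows "arc_sign n p (q \<circ> w \<circ> inv' q) =
           (\<Prod>i \<in> {i \<in> {1..n}. q i < q (w i)}. order_sign (p (q i)) (p (q (w i))))"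
proof -
  have inv: "inv' q (q x) = x" "q (inv' q x) = x" for x
    using q by (simp_all add: permutes_inverses)
  have "arcs n (q \<circ> w \<circ> inv' q) = q ` {i \<in> {1..n}. q i < q (w i)}"
    using permutes_in_image[OF q] permutes_in_image[OF permutes_inv[OF q]] inv
    by (auto simp: arcs_def image_iff) metis
  then show ?thesis
    unfolding arc_sign_def
    by (simp add: prod.reindex inj_on_subset[OF permutes_inj[OF q]] inv)
qed

lemma arc_sign_cocycle:
  assumes p: "p permutes {1..n}" and q: "q permutes {1..n}" and w: "w \<in> involutions n"
  shows "arc_sign n (p \<circ> q) w = arc_sign n p (q \<circ> w \<circ> inv' q) * arc_sign n q w"
proof -
  let ?h = "\<lambda>i. order_sign (p (q i)) (p (q (w i)))"
  define \<tau> where "\<tau> i = (if q i < q (w i) then i else w i)" for i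
  have ww: "w (w i) = i" for i using w by (rule involutions_apply)
  have bij: "bij_betw \<tau> (arcs n w) {i \<in> {1..n}. q i < q (w i)}"
    unfolding \<tau>_def arcs_def
    by (rule involution_reorient_bij[OF _ ww inj_on_subset[OF permutes_inj[OF q]]])
       (use permutes_in_image[OF involutions_permutes[OF w]] in auto)
  have flip: "?h (\<tau> i) = ?h i * order_sign (q i) (q (w i))" if "i \<in> arcs n w" for i
  proof -
    have "q i \<noteq> q (w i)" using that permutes_inj[OF q] by (auto simp: arcs_def dest: injD)
    moreover then have "p (q i) \<noteq> p (q (w i))" using permutes_inj[OF p] by (auto dest: injD)
    ultimately show ?thesis by (auto simp: \<tau>_def order_sign_def ww)
  qed
  have "arc_sign n p (q \<circ> w \<circ> inv' q) = (\<Prod>i \<in> arcs n w. ?h (\<tau> i))"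
    using arc_sign_conj[OF q] prod.reindex_bij_betw[OF bij, of ?h] by simp
  also have "\<dots> = arc_sign n (p \<circ> q) w * arc_sign n q w"
    by (simp add: flip arc_sign_def prod.distrib)
  finally have "arc_sign n p (q \<circ> w \<circ> inv' q) * arc_sign n q w = arc_sign n (p \<circ> q) w"
    by (simp add: mult.assoc arc_sign_square)
  then show ?thesis by simp
qed

text \<open>In the basis: \<open>rep n p C\<^sub>w = arc_sign n p w \<cdot> C\<^bsub>p w p\<inverse>\<^esub>\<close>.\<close>

definition rep :: "nat \<Rightarrow> (nat \<Rightarrow> nat) \<Rightarrow> ((nat \<Rightarrow> nat) \<Rightarrow> rat) \<Rightarrow> ((nat \<Rightarrow> nat) \<Rightarrow> rat)" where
  "rep n p = restrict (\<lambda>f u. if u \<in> involutions n then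
      arc_sign n p (inv' p \<circ> u \<circ> p) * f (inv' p \<circ> u \<circ> p) else 0) (Vn n)"

lemma rep_apply:
  "f \<in> Vn n \<Longrightarrow> rep n p f = (\<lambda>u. if u \<in> involutions n then
      arc_sign n p (inv' p \<circ> u \<circ> p) * f (inv' p \<circ> u \<circ> p) else 0)"
  by (simp add: rep_def)

lemma rep_in_Vn: "f \<in> Vn n \<Longrightarrow> rep n p f \<in> Vn n"
  by (simp add: rep_apply Vn_def)

lemma rep_id_apply: "f \<in> Vn n \<Longrightarrow> rep n id f = f"
  by (rule ext) (auto simp: rep_apply arc_sign_id Vn_def)

lemma rep_comp_apply:
  assumes p: "p permutes {1..n}" and q: "q permutes {1..n}" and f: "f \<in> Vn n"
  shows "rep n (p \<circ> q) f = rep n p (rep n q f)"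
proof
  fix u
  show "rep n (p \<circ> q) f u = rep n p (rep n q f) u"
  proof (cases "u \<in> involutions n")
    case False
    then show ?thesis using f rep_in_Vn[OF f] by (simp add: rep_apply)
  next
    case True
    define v where "v = inv' p \<circ> u \<circ> p"
    define w where "w = inv' q \<circ> v \<circ> q"
    have v: "v \<in> involutions n" unfolding v_def using p True by (rule conj_in_involutions)
    have w: "w \<in> involutions n" unfolding w_def using q v by (rule conj_in_involutions)
    have "inv' (p \<circ> q) = inv' q \<circ> inv' p"
      using p q by (intro o_inv_distrib) (auto dest: permutes_bij)
    then have uw: "inv' (p \<circ> q) \<circ> u \<circ> (p \<circ> q) = w"
      by (simp add: w_def v_def comp_assoc)
    have "q \<circ> w \<circ> inv' q = v"
      using q by (simp add: w_def comp_assoc permutes_inv_o) (simp add: comp_assoc[symmetric] permutes_inv_o)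
    then have "arc_sign n (p \<circ> q) w = arc_sign n p v * arc_sign n q w"
      using arc_sign_cocycle[OF p q w] by simp
    then show ?thesis
      using True f v rep_in_Vn[OF f] by (simp add: rep_apply uw v_def[symmetric] w_def[symmetric])
  qed
qed

lemma rep_simple_refl:
  assumes i: "1 \<le> i" "i < n"
  shows "rep n (simple_refl i) = restrict (rho n i) (Vn n)"
proof (rule ext)
  fix f
  have "rep n (simple_refl i) f u = rho n i f u" if "f \<in> Vn n" for u
  proof (cases "u \<in> involutions n")
    case True
    then have w: "simple_refl i \<circ> u \<circ> simple_refl i \<in> involutions n"
      using conj_in_involutions[OF simple_refl_permutes[OF i]] by simp
    show ?thesis
      using True that
      by (simp add: rep_apply rho_def arc_sign_simple_refl[OF w i] sign_sw_eq[OF w i] Let_def)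
  qed (simp add: rep_apply rho_def that)
  then show "rep n (simple_refl i) f = restrict (rho n i) (Vn n) f"
    by (auto simp: rep_def)
qed

lemma GLV_mult: "A \<otimes>\<^bsub>GLV n\<^esub> B = restrict (A \<circ> B) (Vn n)"
  by (simp add: GLV_def)

lemma GLV_carrier:
  "A \<in> carrier (GLV n) \<longleftrightarrow> A \<in> extensional (Vn n) \<and> bij_betw A (Vn n) (Vn n) \<and> linear_on_Vn n A"
  by (simp add: GLV_def)

lemma rep_comp:
  assumes p: "p permutes {1..n}" and q: "q permutes {1..n}"
  shows "rep n (p \<circ> q) = rep n p \<otimes>\<^bsub>GLV n\<^esub> rep n q"
proof
  fix f
  show "rep n (p \<circ> q) f = (rep n p \<otimes>\<^bsub>GLV n\<^esub> rep n q) f"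
  proof (cases "f \<in> Vn n")
    case True
    then show ?thesis by (simp add: GLV_mult rep_comp_apply[OF p q])
  qed (simp add: GLV_mult rep_def)
qed

lemma rep_in_GLV:
  assumes p: "p permutes {1..n}"
  shows "rep n p \<in> carrier (GLV n)"
proof -
  have p': "inv' p permutes {1..n}" using p by (rule permutes_inv)
  have "bij_betw (rep n p) (Vn n) (Vn n)"
  proof (rule bij_betwI[where g = "rep n (inv' p)"])
    fix f assume f: "f \<in> Vn n"
    show "rep n (inv' p) (rep n p f) = f"
      using rep_comp_apply[OF p' p f] by (simp add: permutes_inv_o[OF p] rep_id_apply f)
    show "rep n p (rep n (inv' p) f) = f"
      using rep_comp_apply[OF p p' f] by (simp add: permutes_inv_o[OF p] rep_id_apply f)
  qed (auto intro: rep_in_Vn)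
  moreover have "linear_on_Vn n (rep n p)"
    unfolding linear_on_Vn_def
  proof (intro ballI allI)
    fix f g :: "(nat \<Rightarrow> nat) \<Rightarrow> rat" and a b :: rat
    assume "f \<in> Vn n" "g \<in> Vn n"
    moreover from this have "(\<lambda>w. a * f w + b * g w) \<in> Vn n" by (simp add: Vn_def)
    ultimately show "rep n p (\<lambda>w. a * f w + b * g w) = (\<lambda>w. a * rep n p f w + b * rep n p g w)"
      by (simp add: rep_apply fun_eq_iff algebra_simps)
  qed
  ultimately show ?thesis by (simp add: GLV_carrier rep_def)
qed

lemma rep_hom: "rep n \<in> hom (sym_group n) (GLV n)"
  by (rule homI) (simp_all add: sym_group_carrier sym_group_mult rep_in_GLV rep_comp)

text \<open>This spares proving that \<open>GLV n\<close> is a group: bijectivity alone cancels the idempotent.\<close>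

lemma GLV_idempotent:
  assumes A: "A \<in> carrier (GLV n)" and idem: "A \<otimes>\<^bsub>GLV n\<^esub> A = A"
  shows "A = \<one>\<^bsub>GLV n\<^esub>"
proof
  fix f
  have ext: "A \<in> extensional (Vn n)" and bij: "bij_betw A (Vn n) (Vn n)"
    using A by (simp_all add: GLV_carrier)
  show "A f = \<one>\<^bsub>GLV n\<^esub> f"
  proof (cases "f \<in> Vn n")
    case True
    then have "A f \<in> Vn n" "A (A f) = A f"
      using bij_betwE[OF bij] fun_cong[OF idem, of f] by (auto simp: GLV_mult)
    then have "A f = f" using bij True by (simp add: bij_betw_def inj_on_def)
    then show ?thesis using True by (simp add: GLV_def)
  qed (use ext in \<open>simp add: GLV_def extensional_def\<close>)
qed

lemma transpose_Suc_eq_conj: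
  "a < b \<Longrightarrow> Transposition.transpose a (Suc b) = simple_refl b \<circ> Transposition.transpose a b \<circ> simple_refl b"
  by (auto simp: fun_eq_iff Transposition.transpose_def simple_refl_apply)

lemma transpose_closure_of_simple_refl:
  assumes step: "\<And>i q. 1 \<le> i \<Longrightarrow> i < n \<Longrightarrow> q permutes {1..n} \<Longrightarrow> P q \<Longrightarrow> P (simple_refl i \<circ> q)"
    and "1 \<le> a" "a < b" "b \<le> n" "q permutes {1..n}" "P q"
  shows "P (Transposition.transpose a b \<circ> q)"
proof -
  obtain k where b: "b = a + Suc k" using \<open>a < b\<close> less_imp_Suc_add by fastforce
  have "a + Suc k \<le> n" "q permutes {1..n}" "P q" using assms b by auto
  then have "P (Transposition.transpose a (a + Suc k) \<circ> q)"
  proof (induction k arbitrary: q)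
    case 0
    have "Transposition.transpose a (a + Suc 0) = simple_refl a"
      by (simp add: simple_refl_def)
    then show ?case using 0 \<open>1 \<le> a\<close> by (simp only:) (rule step, auto)
  next
    case (Suc k)
    let ?b = "a + Suc k" and ?s = "simple_refl (a + Suc k)"
    have s: "1 \<le> ?b" "?b < n" using Suc.prems \<open>1 \<le> a\<close> by auto
    have sq: "?s \<circ> q permutes {1..n}"
      by (rule permutes_compose[OF Suc.prems(2) simple_refl_permutes[OF s]])
    have "P (?s \<circ> q)"
      by (rule step[OF s Suc.prems(2,3)])
    moreover have "a + Suc k \<le> n" using Suc.prems(1) by simp
    ultimately have "P (Transposition.transpose a ?b \<circ> (?s \<circ> q))"
      using Suc.IH[OF _ sq] by blast
    moreover have "Transposition.transpose a ?b \<circ> (?s \<circ> q) permutes {1..n}"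
      using Suc.prems s \<open>1 \<le> a\<close> by (intro permutes_compose permutes_swap_id simple_refl_permutes) auto
    ultimately have "P (?s \<circ> (Transposition.transpose a ?b \<circ> (?s \<circ> q)))"
      using step[OF s] by blast
    moreover have "Transposition.transpose a (a + Suc (Suc k)) \<circ> q =
        ?s \<circ> (Transposition.transpose a ?b \<circ> (?s \<circ> q))"
      using transpose_Suc_eq_conj[of a ?b] by (simp add: comp_assoc)
    ultimately show ?case by (simp only:)
  qed
  then show ?thesis by (simp only: b)
qed

lemma permutes_induct_simple_refl [consumes 1, case_names id simple_refl]:
  assumes "p permutes {1..n}" and "P id"
    and step: "\<And>i q. 1 \<le> i \<Longrightarrow> i < n \<Longrightarrow> q permutes {1..n} \<Longrightarrow> P q \<Longrightarrow> P (simple_refl i \<circ> q)"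
  shows "P p"
  using assms(1) finite_atLeastAtMost
proof (induction rule: permutes_induct)
  case (swap a b q)
  then have "Transposition.transpose a b = Transposition.transpose (min a b) (max a b)"
    by (cases "a < b") (auto simp: transpose_commute min_def max_def)
  then show ?case
    by (simp only:) (rule transpose_closure_of_simple_refl[where P = P, OF step], use swap in auto)
qed (rule \<open>P id\<close>)

lemma GLV_hom_one:
  assumes \<psi>: "\<psi> \<in> hom (sym_group n) (GLV n)"
  shows "\<psi> id = \<one>\<^bsub>GLV n\<^esub>"
proof (rule GLV_idempotent)
  have "id \<in> carrier (sym_group n)" by (simp add: sym_group_carrier)
  then show "\<psi> id \<in> carrier (GLV n)" "\<psi> id \<otimes>\<^bsub>GLV n\<^esub> \<psi> id = \<psi> id"
    using \<psi> hom_mult[OF \<psi>, of id id] by (auto simp: hom_def sym_group_mult)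
qed

lemma GLV_hom_eq_on_simple_refls:
  assumes \<phi>: "\<phi> \<in> hom (sym_group n) (GLV n)" and \<psi>: "\<psi> \<in> hom (sym_group n) (GLV n)"
    and agree: "\<And>i. 1 \<le> i \<Longrightarrow> i < n \<Longrightarrow> \<psi> (simple_refl i) = \<phi> (simple_refl i)"
    and "\<sigma> permutes {1..n}"
  shows "\<psi> \<sigma> = \<phi> \<sigma>"
  using \<open>\<sigma> permutes {1..n}\<close>
proof (induction rule: permutes_induct_simple_refl)
  case id
  show ?case using GLV_hom_one[OF \<phi>] GLV_hom_one[OF \<psi>] by (simp add: id_def)
next
  case (simple_refl i q)
  have "simple_refl i permutes {1..n}" using simple_refl(1,2) by (rule simple_refl_permutes)
  then have "simple_refl i \<in> carrier (sym_group n)" "q \<in> carrier (sym_group n)"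
    using simple_refl(3) by (simp_all add: sym_group_carrier)
  then have mult: "\<chi> (simple_refl i \<circ> q) = \<chi> (simple_refl i) \<otimes>\<^bsub>GLV n\<^esub> \<chi> q"
    if "\<chi> \<in> hom (sym_group n) (GLV n)" for \<chi>
    using hom_mult[OF that] by (simp add: sym_group_mult)
  have "\<psi> (simple_refl i \<circ> q) = \<psi> (simple_refl i) \<otimes>\<^bsub>GLV n\<^esub> \<psi> q"
    by (rule mult[OF \<psi>])
  also have "\<dots> = \<phi> (simple_refl i) \<otimes>\<^bsub>GLV n\<^esub> \<phi> q"
    using agree simple_refl by simp
  also have "\<dots> = \<phi> (simple_refl i \<circ> q)"
    by (rule mult[OF \<phi>, symmetric])
  finally show ?case .
qed

theorem theorem1p1:
  fixes n :: nat
  assumes "n \<ge> 1"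
  shows "\<exists>\<phi> \<in> hom (sym_group n) (GLV n).
           (\<forall>i \<in> {1..<n}. \<phi> (simple_refl i) = restrict (rho n i) (Vn n)) \<and>
           (\<forall>\<psi> \<in> hom (sym_group n) (GLV n).
              (\<forall>i \<in> {1..<n}. \<psi> (simple_refl i) = restrict (rho n i) (Vn n)) \<longrightarrow>
              (\<forall>\<sigma> \<in> carrier (sym_group n). \<psi> \<sigma> = \<phi> \<sigma>))"
proof (intro bexI[of _ "rep n"] conjI ballI impI)
  fix i assume "i \<in> {1..<n}"
  then show "rep n (simple_refl i) = restrict (rho n i) (Vn n)" by (simp add: rep_simple_refl)
next
  fix \<psi> \<sigma>
  assume \<psi>: "\<psi> \<in> hom (sym_group n) (GLV n)"
    and gen: "\<forall>i \<in> {1..<n}. \<psi> (simple_refl i) = restrict (rho n i) (Vn n)"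
    and \<sigma>: "\<sigma> \<in> carrier (sym_group n)"
  show "\<psi> \<sigma> = rep n \<sigma>"
  proof (rule GLV_hom_eq_on_simple_refls[OF rep_hom \<psi>])
    show "\<sigma> permutes {1..n}" using \<sigma> by (simp add: sym_group_carrier)
  qed (simp add: gen rep_simple_refl)
qed (rule rep_hom)

end
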